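(* Let $E$ be a nonempty set and $\mathcal{E}$ a prepaving on $E$. Every maxitive measure $\nu$ on $\mathcal{E}$ is alternating (of infinite order), i.e. for all integers $n\geq 1$ and all $G,G_1,\dots,G_n\in\mathcal{E}$, \[ (-1)^{n+1}\,\Delta_{G_1}\cdots\Delta_{G_n}\nu(G)\geq 0 . \]
   Context: A prepaving on $E$ is a collection of subsets of $E$ containing $\emptyset$ and closed under finite unions. A maxitive measure on $\mathcal{E}$ is a map $\nu:\mathcal{E}\to[0,\infty]$ with $\nu(\emptyset)=0$ and $\nu(G\cup G')=\max(\nu(G),\nu(G'))$ for all $G,G'\in\mathcal{E}$. For a map $f:\mathcal{E}\to\mathbb{R}\cup\{\pm\infty\}$, define $\Delta_{G_1}f(G)=f(G\cup G_1)-f(G)$ and $\Delta_{G_1}\cdots\Delta_{G_n}f(G)$ by iterating this formula (applying $\Delta_{G_1}$ to the function $G\mapsto\Delta_{G_2}\cdots\Delta_{G_n}f(G)$), with the conventions $-\infty+\infty=\infty-\infty=0$. *)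

theory Defs
  imports "HOL-Library.Extended_Real"
begin

definition prepaving :: "'a set \<Rightarrow> 'a set set \<Rightarrow> bool" where
  "prepaving E \<E> \<longleftrightarrow> \<E> \<subseteq> Pow E \<and> {} \<in> \<E> \<and> (\<forall>G\<in>\<E>. \<forall>G'\<in>\<E>. G \<union> G' \<in> \<E>)"

definition maxitive_measure :: "'a set set \<Rightarrow> ('a set \<Rightarrow> ereal) \<Rightarrow> bool" where
  "maxitive_measure \<E> \<nu> \<longleftrightarrow> (\<forall>G\<in>\<E>. 0 \<le> \<nu> G) \<and> \<nu> {} = 0 \<and>
     (\<forall>G\<in>\<E>. \<forall>G'\<in>\<E>. \<nu> (G \<union> G') = max (\<nu> G) (\<nu> G'))"

text \<open>Difference with the paper's convention  -inf + inf = inf - inf = 0.\<close>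
definition ediff :: "ereal \<Rightarrow> ereal \<Rightarrow> ereal" where
  "ediff x y = (if x = y \<and> \<bar>x\<bar> = \<infinity> then 0 else x - y)"

fun Delta :: "'a set list \<Rightarrow> ('a set \<Rightarrow> ereal) \<Rightarrow> 'a set \<Rightarrow> ereal" where
  "Delta [] f G = f G"
| "Delta (G1 # Gs) f G = ediff (Delta Gs f (G \<union> G1)) (Delta Gs f G)"

end

theory Submission
  imports Defs
begin

text \<open>On a maxitive measure, \<open>\<Delta>\<close> only sees the values \<open>\<nu> G, \<nu> G\<^sub>1, \<dots>, \<nu> G\<^sub>n\<close>, and union
  becomes \<open>max\<close>; so everything reduces to iterated differences of the identity on \<open>ereal\<close>
  with respect to \<open>max\<close>. If \<open>f\<close> is antitone, then so is the nonnegative function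
  \<open>c \<mapsto> f c - f (max c b)\<close>, because it vanishes for \<open>c \<ge> b\<close> and equals \<open>f c - f b\<close> below \<open>b\<close>.
  Starting from the antitone function \<open>c \<mapsto> -c\<close>, induction shows that
  \<open>(-1)\<^sup>n\<^sup>+\<^sup>1 \<Delta>\<^sub>b\<^sub>1\<dots>\<Delta>\<^sub>b\<^sub>n id\<close> is antitone, and nonnegative once \<open>n \<ge> 1\<close>.\<close>

lemma ediff_self [simp]: "ediff x x = 0"
  unfolding ediff_def by (cases x) auto

lemma ediff_nonneg: "(y::ereal) \<le> x \<Longrightarrow> 0 \<le> ediff x y"
  unfolding ediff_def by (cases x; cases y) auto

lemma ediff_mono_left: "(x::ereal) \<le> x' \<Longrightarrow> ediff x y \<le> ediff x' y"
  unfolding ediff_def by (cases x; cases x'; cases y) auto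

lemma neg_one_power_mult_ediff:
  "(-1::ereal) ^ Suc k * ediff x y = ediff ((-1) ^ k * y) ((-1) ^ k * x)"
proof -
  have "(-1::ereal) ^ k = (if even k then 1 else -1)"
    by (induction k) auto
  then show ?thesis
    unfolding ediff_def by (cases x; cases y) auto
qed

fun Delta_max :: "ereal list \<Rightarrow> ereal \<Rightarrow> ereal" where
  "Delta_max [] c = c"
| "Delta_max (b # bs) c = ediff (Delta_max bs (max c b)) (Delta_max bs c)"

lemma Delta_eq_Delta_max:
  assumes "prepaving E \<E>" and "maxitive_measure \<E> \<nu>"
    and "set Gs \<subseteq> \<E>" and "G \<in> \<E>"
  shows "Delta Gs \<nu> G = Delta_max (map \<nu> Gs) (\<nu> G)"
  using assms(3,4)
proof (induction Gs arbitrary: G)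
  case Nil
  then show ?case by simp
next
  case (Cons G1 Gs)
  then have "G \<union> G1 \<in> \<E>" and "\<nu> (G \<union> G1) = max (\<nu> G) (\<nu> G1)"
    using assms(1,2) unfolding prepaving_def maxitive_measure_def by auto
  with Cons show ?case by simp
qed

lemma ediff_max_nonneg:
  assumes "antimono (f :: ereal \<Rightarrow> ereal)"
  shows "0 \<le> ediff (f c) (f (max c b))"
  using assms by (intro ediff_nonneg) (simp add: antimonoD)

lemma antimono_ediff_max:
  assumes f: "antimono (f :: ereal \<Rightarrow> ereal)"
  shows "antimono (\<lambda>c. ediff (f c) (f (max c b)))"
proof (rule antimonoI)
  fix c c' :: ereal
  assume "c \<le> c'"
  show "ediff (f c') (f (max c' b)) \<le> ediff (f c) (f (max c b))"
  proof (cases "c' \<le> b")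
    case True
    with \<open>c \<le> c'\<close> have "max c b = b" and "max c' b = b" by auto
    with \<open>c \<le> c'\<close> f show ?thesis by (simp add: ediff_mono_left antimonoD)
  next
    case False
    then show ?thesis using ediff_max_nonneg[OF f] by (simp add: max_def)
  qed
qed

lemma Delta_max_step:
  "(-1) ^ (length (b # bs) + 1) * Delta_max (b # bs) c =
     ediff ((-1) ^ (length bs + 1) * Delta_max bs c)
           ((-1) ^ (length bs + 1) * Delta_max bs (max c b))"
  using neg_one_power_mult_ediff[of "length bs + 1"] by simp

lemma antimono_signed_Delta_max:
  "antimono (\<lambda>c. (-1) ^ (length bs + 1) * Delta_max bs c)"
proof (induction bs)
  case Nil
  show ?case by (auto intro: antimonoI)
next
  case (Cons b bs)
  then show ?case
    unfolding Delta_max_step by (rule antimono_ediff_max)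
qed

lemma signed_Delta_max_nonneg:
  assumes "bs \<noteq> []"
  shows "0 \<le> (-1) ^ (length bs + 1) * Delta_max bs c"
proof -
  obtain b bs' where "bs = b # bs'"
    using assms by (cases bs) auto
  then show ?thesis
    using Delta_max_step ediff_max_nonneg[OF antimono_signed_Delta_max] by simp
qed

theorem proposition2p2:
  fixes E :: "'a set" and \<E> :: "'a set set" and \<nu> :: "'a set \<Rightarrow> ereal"
  assumes "E \<noteq> {}" and "prepaving E \<E>" and "maxitive_measure \<E> \<nu>"
  shows "\<forall>n\<ge>1. \<forall>Gs G. length Gs = n \<and> set Gs \<subseteq> \<E> \<and> G \<in> \<E> \<longrightarrow>
           (-1) ^ (n + 1) * Delta Gs \<nu> G \<ge> 0"
proof (intro allI impI)
  fix n Gs G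
  assume "n \<ge> (1::nat)" and Gs: "length Gs = n \<and> set Gs \<subseteq> \<E> \<and> G \<in> \<E>"
  then have "map \<nu> Gs \<noteq> []" by auto
  from signed_Delta_max_nonneg[OF this, of "\<nu> G"] Gs
  show "(-1) ^ (n + 1) * Delta Gs \<nu> G \<ge> 0"
    using Delta_eq_Delta_max[OF assms(2,3)] by simp
qed

end
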